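(* Let $(N,+,* )$ be a planar nearring presented by $(\Phi,R,M)$. Then: (1) If $D(N)\ne\{0\}$ and every element of $D(N)$ is a zero multiplier, then $GC(N)$ equals the set of zero multipliers, which is an ideal of $N$. (2) If $D(N)$ meets at least two distinct nonzero $\Phi$-orbits and at least one element of $D(N)$ is not a zero multiplier, then $GC(N)=\{0\}$. (3) If $D(N)\setminus\{0\}$ is contained in a single $\Phi$-orbit $r\Phi$ with $r\in R\setminus M$ and $D(N)\ne\{0\}$, then $rZ(\Phi)\cup\{0\}\subseteq GC(N)\subseteq r\Phi\cup\{0\}$. (4) If $D(N)=\{0\}$, then $GC(N)=N$.
   Context: A (right) nearring $(N,+,* )$ is a set with a group $(N,+)$, a semigroup $(N,* )$, and right distributivity $(a+b)*c=a*c+b*c$. $N$ is planar if the relation $a\cong b$ ($x*a=x*b$ for all $x$) has at least $3$ classes and for all $a,b,c$ with $a\not\cong b$ the equation $x*a=x*b+c$ has a unique solution. An ideal is a normal additive subgroup $I$ with $i*n\in I$ and $n*m-n*(m+i)\in I$ for all $i\in I$, $n,m\in N$. Every planar nearring arises as follows, and we always consider it so presented. $\Phi\le \mathrm{Aut}(N,+)$ acts on the right, is fixed point free, and $n\mapsto -n+n\phi$ is bijective for each $\phi\ne\mathrm{id}$. $R$ is a set of representatives of the $\Phi$-orbits of $N\setminus\{0\}$ and $M\subseteq R$. Each $a\ne0$ is uniquely $a=r_a\phi_a$, $r_a\in R$, $\phi_a\in\Phi$. Multiplication: $a*b=0$ if $b=0$ or $r_b\in M$, else $a*b=a\phi_b$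 (and $0*b=0$). The zero multipliers are the elements of $M\Phi\cup\{0\}$, i.e. those $n$ with $x*n=0$ for all $x$. $D(N)=\{n: n*(a+b)=n*a+n*b\ \forall a,b\}$. The generalized centre is $GC(N)=\{n\in N: n*d=d*n \text{ for all } d\in D(N)\}$. $Z(\Phi)$ is the centre of $\Phi$. *)

theory Defs
  imports Main
begin

text \<open>(N,+) is the type 'a with its (not necessarily abelian) group structure.
  Phi is a set of maps acting on the right: n phi is written phi n.\<close>

definition is_aut :: "('a::group_add \<Rightarrow> 'a) \<Rightarrow> bool" where
  "is_aut f \<longleftrightarrow> bij f \<and> (\<forall>x y. f (x + y) = f x + f y)"

definition orbit :: "('a \<Rightarrow> 'a) set \<Rightarrow> 'a \<Rightarrow> 'a set" where
  "orbit Phi a = {phi a | phi. phi \<in> Phi}"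

definition ferrero_pair :: "('a::group_add \<Rightarrow> 'a) set \<Rightarrow> bool" where
  "ferrero_pair Phi \<longleftrightarrow>
     (\<forall>phi\<in>Phi. is_aut phi) \<and> id \<in> Phi \<and>
     (\<forall>phi\<in>Phi. \<forall>psi\<in>Phi. phi \<circ> psi \<in> Phi) \<and>
     (\<forall>phi\<in>Phi. inv phi \<in> Phi) \<and>
     (\<forall>phi\<in>Phi. phi \<noteq> id \<longrightarrow> (\<forall>x. phi x = x \<longrightarrow> x = 0)) \<and>
     (\<forall>phi\<in>Phi. phi \<noteq> id \<longrightarrow> bij (\<lambda>n. - n + phi n))"

definition presentation :: "('a::group_add \<Rightarrow> 'a) set \<Rightarrow> 'a set \<Rightarrow> 'a set \<Rightarrow> bool" where
  "presentation Phi R M \<longleftrightarrow> ferrero_pair Phi \<and> 0 \<notin> R \<and>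
     (\<forall>a. a \<noteq> 0 \<longrightarrow> (\<exists>!r. r \<in> R \<and> a \<in> orbit Phi r)) \<and> M \<subseteq> R"

definition rep :: "('a \<Rightarrow> 'a) set \<Rightarrow> 'a set \<Rightarrow> 'a \<Rightarrow> 'a" where
  "rep Phi R a = (THE r. r \<in> R \<and> a \<in> orbit Phi r)"

definition autof :: "('a \<Rightarrow> 'a) set \<Rightarrow> 'a set \<Rightarrow> 'a \<Rightarrow> ('a \<Rightarrow> 'a)" where
  "autof Phi R a = (THE phi. phi \<in> Phi \<and> a = phi (rep Phi R a))"

definition pmult :: "('a::group_add \<Rightarrow> 'a) set \<Rightarrow> 'a set \<Rightarrow> 'a set \<Rightarrow> 'a \<Rightarrow> 'a \<Rightarrow> 'a" where
  "pmult Phi R M a b = (if b = 0 \<or> rep Phi R b \<in> M then 0 else autof Phi R b a)"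

definition is_planar :: "('a::group_add \<Rightarrow> 'a \<Rightarrow> 'a) \<Rightarrow> bool" where
  "is_planar mul \<longleftrightarrow>
     (let eqv = (\<lambda>a b. \<forall>x. mul x a = mul x b) in
      (\<exists>a b c. \<not> eqv a b \<and> \<not> eqv a c \<and> \<not> eqv b c) \<and>
      (\<forall>a b c. \<not> eqv a b \<longrightarrow> (\<exists>!x. mul x a = mul x b + c)))"

definition planar_presented :: "('a::group_add \<Rightarrow> 'a) set \<Rightarrow> 'a set \<Rightarrow> 'a set \<Rightarrow> bool" where
  "planar_presented Phi R M \<longleftrightarrow> presentation Phi R M \<and> is_planar (pmult Phi R M)"

definition Dset :: "('a::group_add \<Rightarrow> 'a \<Rightarrow> 'a) \<Rightarrow> 'a set" where
  "Dset mul = {n. \<forall>a b. mul n (a + b) = mul n a + mul n b}"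

definition GC :: "('a::group_add \<Rightarrow> 'a \<Rightarrow> 'a) \<Rightarrow> 'a set" where
  "GC mul = {n. \<forall>d\<in>Dset mul. mul n d = mul d n}"

definition zero_multipliers :: "('a::group_add \<Rightarrow> 'a \<Rightarrow> 'a) \<Rightarrow> 'a set" where
  "zero_multipliers mul = {n. \<forall>x. mul x n = 0}"

definition is_ideal :: "('a::group_add \<Rightarrow> 'a \<Rightarrow> 'a) \<Rightarrow> 'a set \<Rightarrow> bool" where
  "is_ideal mul I \<longleftrightarrow>
     0 \<in> I \<and> (\<forall>i\<in>I. \<forall>j\<in>I. i + j \<in> I) \<and> (\<forall>i\<in>I. - i \<in> I) \<and>
     (\<forall>i\<in>I. \<forall>n. n + i - n \<in> I) \<and>
     (\<forall>i\<in>I. \<forall>n. mul i n \<in> I) \<and>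
     (\<forall>i\<in>I. \<forall>n m. mul n m - mul n (m + i) \<in> I)"

definition centre :: "('a \<Rightarrow> 'a) set \<Rightarrow> ('a \<Rightarrow> 'a) set" where
  "centre Phi = {phi \<in> Phi. \<forall>psi\<in>Phi. phi \<circ> psi = psi \<circ> phi}"

end

theory Submission
  imports Defs
begin

text \<open>For b outside the zero multipliers, x * b = phi_b x with phi_b \<in> Phi, so x * b lies in
  the orbit of x. Hence two nonzero elements that are not zero multipliers and commute,
  n * d = phi_d n = phi_n d = d * n, lie in a common orbit; this confines a nonzero element of
  GC(N) to the orbit of the distributive elements, or forces it to be 0. Since Phi acts
  fixed-point-freely, phi_m is determined by its value d * m at one nonzero d. For
  0 \<noteq> d \<in> D(N) the map m \<mapsto> d * m is additive, its kernel is exactly the set of zero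
  multipliers, and equal values d * m = d * m' give equal products _ * m = _ * m';
  this makes the zero multipliers an ideal.\<close>

lemma additive_zero:
  fixes f :: "'a::group_add \<Rightarrow> 'b::group_add"
  assumes "\<And>x y. f (x + y) = f x + f y"
  shows "f 0 = 0"
  using assms[of 0 0] by (metis add.right_neutral add_left_imp_eq)

lemma additive_uminus:
  fixes f :: "'a::group_add \<Rightarrow> 'b::group_add"
  assumes add: "\<And>x y. f (x + y) = f x + f y"
  shows "f (- x) = - f x"
  using add[of "- x" x] additive_zero[of f, OF add] by (simp add: eq_neg_iff_add_eq_0)

lemma additive_diff:
  fixes f :: "'a::group_add \<Rightarrow> 'b::group_add"
  assumes add: "\<And>x y. f (x + y) = f x + f y"
  shows "f (x - y) = f x - f y"
  using add[of x "- y"] additive_uminus[of f, OF add] by simp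

locale ferrero =
  fixes Phi :: "('a::group_add \<Rightarrow> 'a) set"
  assumes ferrero_pair: "ferrero_pair Phi"
begin

lemma Phi_is_aut: "phi \<in> Phi \<Longrightarrow> is_aut phi"
  using ferrero_pair unfolding ferrero_pair_def by (elim conjE) blast

lemma Phi_add: "phi \<in> Phi \<Longrightarrow> phi (x + y) = phi x + phi y"
  using Phi_is_aut unfolding is_aut_def by blast

lemma Phi_bij: "phi \<in> Phi \<Longrightarrow> bij phi"
  using Phi_is_aut unfolding is_aut_def by blast

lemma Phi_comp: "phi \<in> Phi \<Longrightarrow> psi \<in> Phi \<Longrightarrow> phi \<circ> psi \<in> Phi"
  using ferrero_pair unfolding ferrero_pair_def by (elim conjE) blast

lemma Phi_inv: "phi \<in> Phi \<Longrightarrow> inv phi \<in> Phi"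
  using ferrero_pair unfolding ferrero_pair_def by (elim conjE) blast

lemma Phi_fixpoint_free: "phi \<in> Phi \<Longrightarrow> phi x = x \<Longrightarrow> x \<noteq> 0 \<Longrightarrow> phi = id"
  using ferrero_pair unfolding ferrero_pair_def by (elim conjE) blast

lemma Phi_zero: "phi \<in> Phi \<Longrightarrow> phi 0 = 0"
  using additive_zero[of phi] Phi_add by blast

lemma Phi_eq_0_iff: "phi \<in> Phi \<Longrightarrow> phi x = 0 \<longleftrightarrow> x = 0"
  using Phi_bij Phi_zero by (metis bij_is_inj injD)

lemma Phi_eqI:
  assumes phi: "phi \<in> Phi" and psi: "psi \<in> Phi" and "x \<noteq> 0" and "phi x = psi x"
  shows "phi = psi"
proof -
  have bij: "bij psi" using Phi_bij psi .
  have "inv psi \<circ> phi \<in> Phi" using Phi_comp Phi_inv phi psi by blast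
  moreover have "(inv psi \<circ> phi) x = x" using \<open>phi x = psi x\<close> bij by (simp add: bij_is_inj)
  ultimately have "inv psi \<circ> phi = id" using Phi_fixpoint_free \<open>x \<noteq> 0\<close> by blast
  then have "inv psi (phi y) = y" for y by (metis comp_apply id_apply)
  then show ?thesis using bij by (metis bij_inv_eq_iff ext)
qed

lemma in_orbitI: "phi \<in> Phi \<Longrightarrow> phi a \<in> orbit Phi a"
  unfolding orbit_def by blast

lemma orbit_apply: "psi \<in> Phi \<Longrightarrow> orbit Phi (psi a) = orbit Phi a"
proof
  assume psi: "psi \<in> Phi"
  have "phi (psi a) = (phi \<circ> psi) a" for phi :: "'a \<Rightarrow> 'a" by simp
  then show "orbit Phi (psi a) \<subseteq> orbit Phi a"
    using Phi_comp[OF _ psi] unfolding orbit_def by blast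
  have "phi a = (phi \<circ> inv psi) (psi a)" for phi :: "'a \<Rightarrow> 'a"
    using Phi_bij[OF psi] by (simp add: bij_is_inj)
  then show "orbit Phi a \<subseteq> orbit Phi (psi a)"
    using Phi_comp[OF _ Phi_inv[OF psi]] unfolding orbit_def by blast
qed

end

locale presented_nearring =
  fixes Phi :: "('a::group_add \<Rightarrow> 'a) set" and R M :: "'a set"
  assumes presentation: "presentation Phi R M"
begin

abbreviation mul :: "'a \<Rightarrow> 'a \<Rightarrow> 'a" where
  "mul \<equiv> pmult Phi R M"

abbreviation ZM :: "'a set" where
  "ZM \<equiv> zero_multipliers mul"

sublocale ferrero Phi
  using presentation by unfold_locales (simp add: presentation_def)

lemma zero_notin_R: "0 \<notin> R"
  using presentation unfolding presentation_def by blast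

lemma ex1_rep: "a \<noteq> 0 \<Longrightarrow> \<exists>!r. r \<in> R \<and> a \<in> orbit Phi r"
  using presentation unfolding presentation_def by blast

lemma rep_in_R: "a \<noteq> 0 \<Longrightarrow> rep Phi R a \<in> R"
  and in_orbit_rep: "a \<noteq> 0 \<Longrightarrow> a \<in> orbit Phi (rep Phi R a)"
  using theI'[OF ex1_rep] unfolding rep_def by blast+

lemma rep_eqI: "a \<noteq> 0 \<Longrightarrow> r \<in> R \<Longrightarrow> a \<in> orbit Phi r \<Longrightarrow> rep Phi R a = r"
  unfolding rep_def using ex1_rep by (blast intro: the1_equality)

lemma rep_nonzero: "a \<noteq> 0 \<Longrightarrow> rep Phi R a \<noteq> 0"
  using rep_in_R[of a] zero_notin_R by auto

lemma ex1_autof: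
  assumes "a \<noteq> 0"
  shows "\<exists>!phi. phi \<in> Phi \<and> a = phi (rep Phi R a)"
proof -
  obtain phi where phi: "phi \<in> Phi" "a = phi (rep Phi R a)"
    using in_orbit_rep[OF assms] unfolding orbit_def by blast
  moreover have "psi = phi" if "psi \<in> Phi" "a = psi (rep Phi R a)" for psi
  proof (rule Phi_eqI[OF that(1) phi(1) rep_nonzero[OF assms]])
    show "psi (rep Phi R a) = phi (rep Phi R a)" using that(2) phi(2) by (rule trans[OF sym])
  qed
  ultimately show ?thesis by blast
qed

lemma autof_spec: "a \<noteq> 0 \<Longrightarrow> autof Phi R a \<in> Phi \<and> a = autof Phi R a (rep Phi R a)"
  unfolding autof_def by (rule theI'[OF ex1_autof])

lemma autof_in_Phi: "a \<noteq> 0 \<Longrightarrow> autof Phi R a \<in> Phi"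
  using autof_spec by blast

lemma autof_rep: "a \<noteq> 0 \<Longrightarrow> autof Phi R a (rep Phi R a) = a"
  using autof_spec[THEN conjunct2] by (rule sym)

lemma autof_eqI:
  assumes "a \<noteq> 0" "phi \<in> Phi" "phi (rep Phi R a) = a"
  shows "autof Phi R a = phi"
  by (rule Phi_eqI[OF autof_in_Phi[OF assms(1)] assms(2) rep_nonzero[OF assms(1)]])
    (simp add: autof_rep assms)

lemma orbit_rep: "a \<noteq> 0 \<Longrightarrow> orbit Phi (rep Phi R a) = orbit Phi a"
  using orbit_apply[OF autof_in_Phi, of a "rep Phi R a"] by (simp add: autof_rep)

lemma rep_apply:
  assumes phi: "phi \<in> Phi" and a: "a \<noteq> 0"
  shows "rep Phi R (phi a) = rep Phi R a"
proof (rule rep_eqI)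
  show "phi a \<noteq> 0" using Phi_eq_0_iff[OF phi] a by simp
  show "rep Phi R a \<in> R" using rep_in_R[OF a] .
  show "phi a \<in> orbit Phi (rep Phi R a)" using in_orbitI[OF phi] orbit_rep[OF a] by simp
qed

lemma mul_zero_left: "mul 0 b = 0"
  unfolding pmult_def using Phi_zero autof_in_Phi by auto

lemma mul_zero_right: "mul x 0 = 0"
  by (simp add: pmult_def)

lemma mul_nonzero_multiplier: "b \<noteq> 0 \<Longrightarrow> rep Phi R b \<notin> M \<Longrightarrow> mul x b = autof Phi R b x"
  unfolding pmult_def by simp

lemma zero_multipliers_iff: "b \<in> ZM \<longleftrightarrow> b = 0 \<or> rep Phi R b \<in> M"
proof
  assume "b \<in> ZM"
  then have "mul b b = 0" unfolding zero_multipliers_def by blast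
  show "b = 0 \<or> rep Phi R b \<in> M"
  proof (rule ccontr)
    assume b: "\<not> (b = 0 \<or> rep Phi R b \<in> M)"
    then have "autof Phi R b b \<noteq> 0" using Phi_eq_0_iff[OF autof_in_Phi] by simp
    with \<open>mul b b = 0\<close> b show False by (simp add: mul_nonzero_multiplier)
  qed
qed (auto simp: zero_multipliers_def pmult_def)

lemma zero_in_zero_multipliers: "0 \<in> ZM"
  by (simp add: zero_multipliers_iff)

lemma mul_eq_0_iff: "d \<noteq> 0 \<Longrightarrow> mul d b = 0 \<longleftrightarrow> b \<in> ZM"
  using zero_multipliers_iff mul_nonzero_multiplier Phi_eq_0_iff[OF autof_in_Phi]
  by (auto simp: pmult_def)

lemma zero_multipliers_apply: "phi \<in> Phi \<Longrightarrow> i \<in> ZM \<Longrightarrow> phi i \<in> ZM"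
  by (cases "i = 0") (simp_all add: zero_multipliers_iff rep_apply Phi_zero)

lemma mul_zero_multiplier_left: "i \<in> ZM \<Longrightarrow> mul i n \<in> ZM"
  using zero_multipliers_apply[OF autof_in_Phi] zero_in_zero_multipliers
  by (auto simp: pmult_def)

lemma mul_right_cong:
  assumes d: "d \<noteq> 0" and eq: "mul d m = mul d m'"
  shows "mul n m = mul n m'"
proof (cases "m \<in> ZM")
  case True
  then have "m' \<in> ZM" using eq unfolding mul_eq_0_iff[OF d, symmetric] by simp
  with True show ?thesis unfolding zero_multipliers_def by simp
next
  case False
  then have "m' \<notin> ZM" using eq unfolding mul_eq_0_iff[OF d, symmetric] by simp
  with False have m: "m \<noteq> 0" "rep Phi R m \<notin> M" and m': "m' \<noteq> 0" "rep Phi R m' \<notin> M"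
    by (simp_all add: zero_multipliers_iff)
  have "autof Phi R m d = autof Phi R m' d"
    using eq by (simp add: mul_nonzero_multiplier m m')
  then have "autof Phi R m = autof Phi R m'"
    by (rule Phi_eqI[OF autof_in_Phi[OF m(1)] autof_in_Phi[OF m'(1)] d])
  then show ?thesis by (simp add: mul_nonzero_multiplier m m')
qed

lemma mul_commute_rep_eq:
  assumes "a \<notin> ZM" "b \<notin> ZM" and "mul a b = mul b a"
  shows "rep Phi R a = rep Phi R b"
proof -
  have a: "a \<noteq> 0" "rep Phi R a \<notin> M" and b: "b \<noteq> 0" "rep Phi R b \<notin> M"
    using assms by (simp_all add: zero_multipliers_iff)
  have "autof Phi R b a = autof Phi R a b"
    using assms(3) by (simp add: mul_nonzero_multiplier a b)
  then show ?thesis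
    using rep_apply[OF autof_in_Phi[OF b(1)] a(1)] rep_apply[OF autof_in_Phi[OF a(1)] b(1)] by simp
qed

lemma zero_in_Dset: "0 \<in> Dset mul"
  unfolding Dset_def by (simp add: mul_zero_left)

lemma zero_in_GC: "0 \<in> GC mul"
  unfolding GC_def by (simp add: mul_zero_left mul_zero_right)

lemma zero_multipliers_ideal:
  assumes d: "d \<in> Dset mul" "d \<noteq> 0"
  shows "is_ideal mul ZM"
proof -
  let ?f = "mul d"
  have add: "?f (x + y) = ?f x + ?f y" for x y using d(1) unfolding Dset_def by blast
  have ZM_eq: "i \<in> ZM \<longleftrightarrow> ?f i = 0" for i using mul_eq_0_iff[OF d(2)] by simp
  have add_closed: "i + j \<in> ZM" if "i \<in> ZM" "j \<in> ZM" for i j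
    using that add by (simp add: ZM_eq)
  have uminus_closed: "- i \<in> ZM" if "i \<in> ZM" for i
    using that additive_uminus[of ?f, OF add] by (simp add: ZM_eq)
  have conj_closed: "n + i - n \<in> ZM" if "i \<in> ZM" for i n
    using that add additive_diff[of ?f, OF add] by (simp add: ZM_eq)
  have right_closed: "mul n m - mul n (m + i) \<in> ZM" if "i \<in> ZM" for i n m
  proof -
    have "?f m = ?f (m + i)" using that add by (simp add: ZM_eq)
    then have "mul n m = mul n (m + i)" by (rule mul_right_cong[OF d(2)])
    then show ?thesis using zero_in_zero_multipliers by simp
  qed
  show ?thesis
    unfolding is_ideal_def
    by (intro conjI ballI allI zero_in_zero_multipliers add_closed uminus_closed conj_closed
        mul_zero_multiplier_left right_closed)
qed

lemma GC_eq_zero_multipliers: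
  assumes "d \<in> Dset mul" "d \<noteq> 0" and "Dset mul \<subseteq> ZM"
  shows "GC mul = ZM"
proof
  show "GC mul \<subseteq> ZM"
  proof
    fix n assume "n \<in> GC mul"
    then have "mul d n = mul n d" using \<open>d \<in> Dset mul\<close> unfolding GC_def by simp
    also have "\<dots> = 0" using assms unfolding zero_multipliers_def by blast
    finally show "n \<in> ZM" using mul_eq_0_iff[OF \<open>d \<noteq> 0\<close>] by simp
  qed
  show "ZM \<subseteq> GC mul"
    using assms(3) unfolding GC_def zero_multipliers_def by auto
qed

lemma GC_not_zero_multiplier:
  assumes "n \<in> GC mul" "n \<noteq> 0" and "d \<in> Dset mul" "d \<notin> ZM"
  shows "n \<notin> ZM"
proof -
  have "d \<noteq> 0" using \<open>d \<notin> ZM\<close> zero_in_zero_multipliers by blast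
  have "mul d n = mul n d" using assms(1,3) unfolding GC_def by simp
  also have "\<dots> \<noteq> 0" using mul_eq_0_iff[OF \<open>n \<noteq> 0\<close>] \<open>d \<notin> ZM\<close> by simp
  finally show ?thesis using mul_eq_0_iff[OF \<open>d \<noteq> 0\<close>] by simp
qed

lemma GC_rep_eq:
  assumes "n \<in> GC mul" "n \<notin> ZM" and "x \<in> Dset mul" "x \<noteq> 0"
  shows "rep Phi R x = rep Phi R n"
proof -
  have "n \<noteq> 0" using \<open>n \<notin> ZM\<close> zero_in_zero_multipliers by blast
  have "mul x n = mul n x" using assms(1,3) unfolding GC_def by simp
  moreover have "mul x n \<noteq> 0" using mul_eq_0_iff[OF \<open>x \<noteq> 0\<close>] \<open>n \<notin> ZM\<close> by simp
  ultimately have "x \<notin> ZM" using mul_eq_0_iff[OF \<open>n \<noteq> 0\<close>] by simp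
  from this \<open>n \<notin> ZM\<close> \<open>mul x n = mul n x\<close> show ?thesis by (rule mul_commute_rep_eq)
qed

lemma GC_eq_zero:
  assumes "a \<in> Dset mul - {0}" "b \<in> Dset mul - {0}" "orbit Phi a \<noteq> orbit Phi b"
    and "\<not> Dset mul \<subseteq> ZM"
  shows "GC mul = {0}"
proof -
  have "n = 0" if "n \<in> GC mul" for n
  proof (rule ccontr)
    assume "n \<noteq> 0"
    then have "n \<notin> ZM" using GC_not_zero_multiplier \<open>n \<in> GC mul\<close> assms(4) by blast
    then have "rep Phi R a = rep Phi R b" using GC_rep_eq \<open>n \<in> GC mul\<close> assms(1,2) by simp
    then have "orbit Phi (rep Phi R a) = orbit Phi (rep Phi R b)" by simp
    then show False using orbit_rep assms(1-3) by simp
  qed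
  then show ?thesis using zero_in_GC by blast
qed

lemma centre_orbit_subset_GC:
  assumes r: "r \<in> R - M" and D: "Dset mul - {0} \<subseteq> orbit Phi r"
  shows "(\<lambda>phi. phi r) ` centre Phi \<subseteq> GC mul"
proof clarify
  fix phi assume "phi \<in> centre Phi"
  then have phi: "phi \<in> Phi" and comm: "\<And>psi. psi \<in> Phi \<Longrightarrow> phi \<circ> psi = psi \<circ> phi"
    unfolding centre_def by auto
  have "r \<noteq> 0" using r zero_notin_R by blast
  then have "phi r \<noteq> 0" using Phi_eq_0_iff[OF phi] by simp
  have rep_r: "rep Phi R y = r" if "y \<noteq> 0" "y \<in> orbit Phi r" for y
    using rep_eqI that r by blast
  have "mul (phi r) d = mul d (phi r)" if "d \<in> Dset mul" for d
  proof (cases "d = 0")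
    case False
    then have "rep Phi R d = r" using rep_r D that by blast
    then have "mul (phi r) d = autof Phi R d (phi r)" and "autof Phi R d r = d"
      using mul_nonzero_multiplier autof_rep False r by auto
    moreover have "rep Phi R (phi r) = r" using rep_r \<open>phi r \<noteq> 0\<close> in_orbitI[OF phi] by blast
    then have "mul d (phi r) = phi d"
      using mul_nonzero_multiplier autof_eqI[OF \<open>phi r \<noteq> 0\<close> phi] \<open>phi r \<noteq> 0\<close> r by auto
    ultimately show ?thesis using comm[OF autof_in_Phi[OF False]] by (metis comp_apply)
  qed (simp add: mul_zero_left mul_zero_right)
  then show "phi r \<in> GC mul" unfolding GC_def by blast
qed

lemma GC_subset_orbit:
  assumes r: "r \<in> R - M" and "d \<in> Dset mul" "d \<noteq> 0" and D: "Dset mul - {0} \<subseteq> orbit Phi r"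
  shows "GC mul \<subseteq> orbit Phi r \<union> {0}"
proof
  fix n assume n: "n \<in> GC mul"
  have "rep Phi R d = r" using rep_eqI assms by blast
  then have "d \<notin> ZM" using r \<open>d \<noteq> 0\<close> by (simp add: zero_multipliers_iff)
  show "n \<in> orbit Phi r \<union> {0}"
  proof (cases "n = 0")
    case False
    then have "n \<notin> ZM" using GC_not_zero_multiplier n assms(2) \<open>d \<notin> ZM\<close> by blast
    then have "rep Phi R n = r" using GC_rep_eq[OF n _ assms(2,3)] \<open>rep Phi R d = r\<close> by simp
    then show ?thesis using in_orbit_rep[OF False] by simp
  qed simp
qed

lemma GC_eq_UNIV: "Dset mul = {0} \<Longrightarrow> GC mul = UNIV"
  unfolding GC_def by (simp add: mul_zero_left mul_zero_right)

end

theorem mainTheorem10: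
  fixes Phi :: "('a::group_add \<Rightarrow> 'a) set" and R M :: "'a set"
  assumes "planar_presented Phi R M"
  defines "mul \<equiv> pmult Phi R M"
  shows "(Dset mul \<noteq> {0} \<and> Dset mul \<subseteq> zero_multipliers mul \<longrightarrow>
            GC mul = zero_multipliers mul \<and> is_ideal mul (zero_multipliers mul))
       \<and> ((\<exists>a\<in>Dset mul - {0}. \<exists>b\<in>Dset mul - {0}. orbit Phi a \<noteq> orbit Phi b) \<and>
            \<not> Dset mul \<subseteq> zero_multipliers mul \<longrightarrow> GC mul = {0})
       \<and> (\<forall>r. r \<in> R - M \<and> Dset mul - {0} \<subseteq> orbit Phi r \<and> Dset mul \<noteq> {0} \<longrightarrow>
            (\<lambda>phi. phi r) ` centre Phi \<union> {0} \<subseteq> GC mul \<and> GC mul \<subseteq> orbit Phi r \<union> {0})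
       \<and> (Dset mul = {0} \<longrightarrow> GC mul = UNIV)"
proof -
  interpret presented_nearring Phi R M
    using assms(1) by unfold_locales (simp add: planar_presented_def)
  have nonzero_D: "\<exists>d. d \<in> Dset mul \<and> d \<noteq> 0" if "Dset mul \<noteq> {0}"
    using that zero_in_Dset[folded mul_def] by blast
  show ?thesis
  proof (intro conjI impI allI)
    assume D: "Dset mul \<noteq> {0} \<and> Dset mul \<subseteq> zero_multipliers mul"
    with nonzero_D obtain d where "d \<in> Dset mul" "d \<noteq> 0" by blast
    with D show "GC mul = zero_multipliers mul" and "is_ideal mul (zero_multipliers mul)"
      using GC_eq_zero_multipliers[folded mul_def] zero_multipliers_ideal[folded mul_def] by blast+
  next
    assume "(\<exists>a\<in>Dset mul - {0}. \<exists>b\<in>Dset mul - {0}. orbit Phi a \<noteq> orbit Phi b)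
      \<and> \<not> Dset mul \<subseteq> zero_multipliers mul"
    then show "GC mul = {0}" using GC_eq_zero[folded mul_def] by blast
  next
    fix r assume r: "r \<in> R - M \<and> Dset mul - {0} \<subseteq> orbit Phi r \<and> Dset mul \<noteq> {0}"
    then show "(\<lambda>phi. phi r) ` centre Phi \<union> {0} \<subseteq> GC mul"
      using centre_orbit_subset_GC[folded mul_def] zero_in_GC[folded mul_def] by blast
    from r nonzero_D obtain d where "d \<in> Dset mul" "d \<noteq> 0" by blast
    with r show "GC mul \<subseteq> orbit Phi r \<union> {0}" using GC_subset_orbit[folded mul_def] by blast
  qed (rule GC_eq_UNIV[folded mul_def])
qed

end
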